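(* Let $u$ be a recurrent aperiodic infinite word over $\{0,\ldots,q-1\}$. The valid permutation $\alpha_u$ is ergodic if and only if for every factor $w$ of $u$ the uniform frequency $\rho_w(u)$ exists and $\rho_w(u)\neq 0$.
   Context: For an aperiodic infinite word $u$ over $\{0,\ldots,q-1\}$ with shifts $T^n u=u[n]u[n+1]\cdots$, the valid permutation $\alpha_u$ is the infinite permutation represented by the sequence $(0.T^n u)_{n\ge0}$ of real numbers written in base $q$; equivalently $\alpha_u[i]<\alpha_u[j]$ iff $T^i u$ is lexicographically smaller than $T^j u$. An infinite permutation is an equivalence class of real sequences with pairwise distinct elements, two sequences $(a[n]),(b[n])$ being equivalent iff $a[i]<a[j]\Leftrightarrow b[i]<b[j]$ for all $i,j$. A real sequence $(a[i])_{i\ge 0}$ is canonical if its elements are pairwise distinct, lie in $[0,1]$, and for every $t\in[0,1]$ the ratio $\#\{0\le k<n: a[j+k]<t\}/n\to t$ as $n\to\infty$ uniformly in $j$; a permutation is ergodic if it has a canonical representative. For a factor $w$ of $u$, the uniform frequency $\rho_w(u)$ exists if $|u[i..i+n]|_w/(n+1)$ converges to $\rho_w(u)$ as $n\to\infty$ uniformly in $i$, where $|x|_w$ is the number of occurrences of $w$ in $x$. *)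

theory Defs
  imports Complex_Main
begin

text \<open>Infinite words are functions nat => nat; the alphabet is {0..q-1}.\<close>

definition shift :: "nat \<Rightarrow> (nat \<Rightarrow> nat) \<Rightarrow> (nat \<Rightarrow> nat)" where
  "shift n u = (\<lambda>k. u (n + k))"

definition lex_less :: "(nat \<Rightarrow> nat) \<Rightarrow> (nat \<Rightarrow> nat) \<Rightarrow> bool" where
  "lex_less x y \<longleftrightarrow> (\<exists>k. (\<forall>m<k. x m = y m) \<and> x k < y k)"

definition aperiodic :: "(nat \<Rightarrow> nat) \<Rightarrow> bool" where
  "aperiodic u \<longleftrightarrow> \<not> (\<exists>p>0. \<exists>N. \<forall>n\<ge>N. u (n + p) = u n)"

definition occurs_at :: "nat list \<Rightarrow> (nat \<Rightarrow> nat) \<Rightarrow> nat \<Rightarrow> bool" where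
  "occurs_at w u i \<longleftrightarrow> (\<forall>k<length w. u (i + k) = w ! k)"

definition factor :: "nat list \<Rightarrow> (nat \<Rightarrow> nat) \<Rightarrow> bool" where
  "factor w u \<longleftrightarrow> (\<exists>i. occurs_at w u i)"

definition recurrent :: "(nat \<Rightarrow> nat) \<Rightarrow> bool" where
  "recurrent u \<longleftrightarrow> (\<forall>w. factor w u \<longrightarrow> infinite {i. occurs_at w u i})"

text \<open>Number of occurrences of w in the finite factor u[i..i+n] (length n+1).\<close>
definition occ_count :: "(nat \<Rightarrow> nat) \<Rightarrow> nat list \<Rightarrow> nat \<Rightarrow> nat \<Rightarrow> nat" where
  "occ_count u w i n = card {p. i \<le> p \<and> p + length w \<le> i + n + 1 \<and> occurs_at w u p}"

definition has_uniform_freq :: "(nat \<Rightarrow> nat) \<Rightarrow> nat list \<Rightarrow> real \<Rightarrow> bool" where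
  "has_uniform_freq u w \<rho> \<longleftrightarrow>
     (\<forall>\<epsilon>>0. \<exists>N. \<forall>n\<ge>N. \<forall>i. \<bar>real (occ_count u w i n) / real (n + 1) - \<rho>\<bar> < \<epsilon>)"

definition canonical :: "(nat \<Rightarrow> real) \<Rightarrow> bool" where
  "canonical a \<longleftrightarrow> inj a \<and> (\<forall>i. 0 \<le> a i \<and> a i \<le> 1) \<and>
     (\<forall>t\<in>{0..1}. \<forall>\<epsilon>>0. \<exists>N. \<forall>n\<ge>N. \<forall>j.
        \<bar>real (card {k. k < n \<and> a (j + k) < t}) / real n - t\<bar> < \<epsilon>)"

text \<open>An infinite permutation, given by its order relation on indices
  (the common order type of all representing sequences), is ergodic
  iff it has a canonical representative.\<close>
definition ergodic_perm :: "(nat \<Rightarrow> nat \<Rightarrow> bool) \<Rightarrow> bool" where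
  "ergodic_perm R \<longleftrightarrow> (\<exists>a. canonical a \<and> (\<forall>i j. a i < a j \<longleftrightarrow> R i j))"

definition valid_perm :: "(nat \<Rightarrow> nat) \<Rightarrow> nat \<Rightarrow> nat \<Rightarrow> bool" where
  "valid_perm u i j \<longleftrightarrow> lex_less (shift i u) (shift j u)"

end

theory Submission
  imports Defs "HOL-Analysis.Uniform_Limit"
begin

(*
  If the valid permutation has a canonical representative a, the occurrences of a factor w
  form an interval for the lexicographic order of the shifts, hence are the positions k with
  a k in some interval [\<alpha>, \<beta>] up to its endpoints; canonicity makes their uniform frequency
  \<beta> - \<alpha>, which is positive by recurrence.

  Conversely, if all factors have positive uniform frequencies, the frequencies form a measure
  on cylinders, and the mass of all words lexicographically below T^k u represents the valid
  permutation: recurrence and aperiodicity make it strictly monotone. Aperiodicity and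
  uniformity make the frequencies of long words small, so the uniform frequencies of the
  cylinders turn into uniform distribution of the values of this representative.
*)

section \<open>Shifts, prefixes and the lexicographic order\<close>

lemma first_difference:
  fixes x y :: "nat \<Rightarrow> 'a"
  assumes "x \<noteq> y"
  obtains p where "\<forall>s<p. x s = y s" "x p \<noteq> y p"
proof -
  from assms obtain k where "x k \<noteq> y k" by auto
  then show ?thesis
    using that[of "LEAST k. x k \<noteq> y k"] by (metis (mono_tags, lifting) LeastI not_less_Least)
qed

lemma lex_less_total: "x \<noteq> y \<Longrightarrow> lex_less x y \<or> lex_less y x"
  unfolding lex_less_def by (metis first_difference linorder_neq_iff)

lemma shift_eq_imp_periodic:
  assumes "shift k u = shift b u" "b < k"
  shows "\<forall>n\<ge>b. u (n + (k - b)) = u n"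
proof (intro allI impI)
  fix n assume "b \<le> n"
  then have "n + (k - b) = k + (n - b)" "n = b + (n - b)" using assms(2) by auto
  then show "u (n + (k - b)) = u n" using fun_cong[OF assms(1), of "n - b"] unfolding shift_def by metis
qed

lemma aperiodic_shift_neq:
  assumes "aperiodic u" "k \<noteq> b"
  shows "shift k u \<noteq> shift b u"
proof
  assume eq: "shift k u = shift b u"
  have "\<exists>p>0. \<exists>N. \<forall>n\<ge>N. u (n + p) = u n"
  proof (cases "b < k")
    case True then show ?thesis using shift_eq_imp_periodic[OF eq] by (intro exI[of _ "k - b"]) auto
  next
    case False
    then have "k < b" using assms(2) by simp
    then show ?thesis using shift_eq_imp_periodic[OF eq[symmetric]] by (intro exI[of _ "b - k"]) auto
  qed
  then show False using assms(1) unfolding aperiodic_def by blast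
qed

lemma occurs_at_shift: "occurs_at w (shift k u) 0 \<longleftrightarrow> occurs_at w u k"
  unfolding occurs_at_def shift_def by simp

lemma occurs_at_lex_between:
  assumes x: "occurs_at w x 0" and z: "occurs_at w z 0" and "lex_less x y" "lex_less y z"
  shows "occurs_at w y 0"
proof -
  obtain m where m: "\<forall>s<m. x s = y s" "x m < y m" using \<open>lex_less x y\<close> unfolding lex_less_def by blast
  obtain l where l: "\<forall>s<l. y s = z s" "y l < z l" using \<open>lex_less y z\<close> unfolding lex_less_def by blast
  have xw: "\<And>s. s < length w \<Longrightarrow> x s = w ! s" and zw: "\<And>s. s < length w \<Longrightarrow> z s = w ! s"
    using x z unfolding occurs_at_def by auto
  consider "length w \<le> m" | "length w \<le> l" | "m < length w" "l < length w" by linarith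
  then show ?thesis
  proof cases
    case 1 then show ?thesis using m(1) xw unfolding occurs_at_def by auto
  next
    case 2 then show ?thesis using l(1) zw unfolding occurs_at_def by auto
  next
    case 3
    then show ?thesis using m l xw zw by (metis less_asym linorder_neq_iff)
  qed
qed

definition prefix_at :: "(nat \<Rightarrow> nat) \<Rightarrow> nat \<Rightarrow> nat \<Rightarrow> nat list" where
  "prefix_at u k m = map (\<lambda>i. u (k + i)) [0..<m]"

lemma length_prefix_at [simp]: "length (prefix_at u k m) = m"
  unfolding prefix_at_def by simp

lemma prefix_at_0 [simp]: "prefix_at u k 0 = []"
  unfolding prefix_at_def by simp

lemma nth_prefix_at: "i < m \<Longrightarrow> prefix_at u k m ! i = u (k + i)"
  unfolding prefix_at_def by simp

lemma prefix_at_Suc: "prefix_at u k (Suc m) = prefix_at u k m @ [u (k + m)]"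
  unfolding prefix_at_def by simp

lemma take_prefix_at: "m \<le> M \<Longrightarrow> take m (prefix_at u k M) = prefix_at u k m"
  unfolding prefix_at_def by (simp add: take_map)

lemma prefix_at_cong: "\<forall>s<m. u (k + s) = u (b + s) \<Longrightarrow> prefix_at u k m = prefix_at u b m"
  unfolding prefix_at_def by simp

lemma occurs_at_iff_prefix_at: "occurs_at w u k \<longleftrightarrow> prefix_at u k (length w) = w"
  unfolding occurs_at_def by (auto simp: list_eq_iff_nth_eq nth_prefix_at)

lemma factor_prefix_at: "factor (prefix_at u k m) u"
  unfolding factor_def occurs_at_iff_prefix_at by (metis length_prefix_at)

lemma occurs_at_snoc: "occurs_at (w @ [c]) u p \<longleftrightarrow> occurs_at w u p \<and> u (p + length w) = c"
  unfolding occurs_at_def by (auto simp: nth_append less_Suc_eq)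

section \<open>Window counts and their uniform limits\<close>

lemma occ_count_Nil: "occ_count u [] j n = n + 2"
proof -
  have "{p. j \<le> p \<and> p + length [] \<le> j + n + 1 \<and> occurs_at [] u p} = {j..j + n + 1}"
    unfolding occurs_at_def by auto
  then show ?thesis unfolding occ_count_def by simp
qed

lemma occ_count_nonfactor: "\<not> factor w u \<Longrightarrow> occ_count u w j n = 0"
  unfolding occ_count_def factor_def by simp

text \<open>Unlike occ_count, occ_starts also counts occurrences running past the end of the window.\<close>

definition occ_starts :: "(nat \<Rightarrow> nat) \<Rightarrow> nat list \<Rightarrow> nat \<Rightarrow> nat \<Rightarrow> nat" where
  "occ_starts u w j n = card {k. k < n \<and> occurs_at w u (j + k)}"

lemma occ_count_le_occ_starts:
  assumes "w \<noteq> []"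
  shows "occ_count u w j n \<le> occ_starts u w j (Suc n)"
proof -
  have "{p. j \<le> p \<and> p + length w \<le> j + n + 1 \<and> occurs_at w u p}
      \<subseteq> (\<lambda>k. j + k) ` {k. k < Suc n \<and> occurs_at w u (j + k)}"
  proof
    fix p assume "p \<in> {p. j \<le> p \<and> p + length w \<le> j + n + 1 \<and> occurs_at w u p}"
    with assms have "p - j < Suc n" "occurs_at w u (j + (p - j))" "p = j + (p - j)"
      by (auto simp: neq_Nil_conv)
    then show "p \<in> (\<lambda>k. j + k) ` {k. k < Suc n \<and> occurs_at w u (j + k)}" by blast
  qed
  then have "occ_count u w j n \<le> card ((\<lambda>k. j + k) ` {k. k < Suc n \<and> occurs_at w u (j + k)})"
    unfolding occ_count_def by (intro card_mono) auto
  also have "\<dots> \<le> occ_starts u w j (Suc n)"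
    unfolding occ_starts_def by (rule card_image_le) auto
  finally show ?thesis .
qed

lemma occ_starts_le_occ_count: "occ_starts u w j (Suc n) \<le> occ_count u w j n + length w"
proof -
  define P where "P = {p. j \<le> p \<and> p + length w \<le> j + n + 1 \<and> occurs_at w u p}"
  have finP: "finite P" unfolding P_def by (rule finite_subset[of _ "{..j + n + 1}"]) auto
  have "{k. k < Suc n \<and> occurs_at w u (j + k)} \<subseteq> (\<lambda>p. p - j) ` P \<union> {Suc n - length w..<Suc n}"
    unfolding P_def by (auto intro!: image_eqI[where x = "j + k" for k])
  then have "occ_starts u w j (Suc n) \<le> card ((\<lambda>p. p - j) ` P \<union> {Suc n - length w..<Suc n})"
    unfolding occ_starts_def using finP by (intro card_mono) auto
  also have "\<dots> \<le> card ((\<lambda>p. p - j) ` P) + card {Suc n - length w..<Suc n}"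
    by (rule card_Un_le)
  also have "\<dots> \<le> occ_count u w j n + length w"
    unfolding occ_count_def P_def[symmetric] using finP by (intro add_mono card_image_le) auto
  finally show ?thesis .
qed

lemma abs_diff_divide_Suc_le:
  fixes x y :: real
  assumes "\<bar>x - y\<bar> \<le> C"
  shows "\<bar>x / real (Suc n) - y / real (Suc n)\<bar> \<le> C / real (Suc n)"
proof -
  have "\<bar>x / real (Suc n) - y / real (Suc n)\<bar> = \<bar>x - y\<bar> / real (Suc n)"
    by (simp add: diff_divide_distrib[symmetric])
  then show ?thesis using assms by (simp add: divide_right_mono)
qed

lemma uniform_limit_const_in_space:
  assumes "(c \<longlongrightarrow> l) F"
  shows "uniform_limit S (\<lambda>n x. c n) (\<lambda>_. l) F"
  using assms by (auto intro!: uniform_limitI simp: tendsto_iff elim: eventually_mono)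

lemma uniform_limit_perturb:
  fixes f g :: "nat \<Rightarrow> 'a \<Rightarrow> real"
  assumes f: "uniform_limit S f l sequentially"
    and close: "\<And>n x. x \<in> S \<Longrightarrow> \<bar>g n x - f n x\<bar> \<le> C / real (Suc n)"
  shows "uniform_limit S g l sequentially"
proof -
  have "(\<lambda>n. C / real (Suc n)) \<longlonglongrightarrow> 0"
    using tendsto_mult_right_zero[OF LIMSEQ_inverse_real_of_nat, of C] by (simp add: divide_inverse)
  then have "uniform_limit S (\<lambda>n x. g n x - f n x) (\<lambda>_. 0) sequentially"
    using close by (intro uniform_limit_null_comparison[OF _ uniform_limit_const_in_space]) auto
  from uniform_limit_add[OF f this] show ?thesis by simp
qed

lemma uniform_limit_sum:
  fixes f :: "'i \<Rightarrow> nat \<Rightarrow> 'a \<Rightarrow> real"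
  assumes "finite I" "\<And>i. i \<in> I \<Longrightarrow> uniform_limit S (f i) (l i) F"
  shows "uniform_limit S (\<lambda>n x. \<Sum>i\<in>I. f i n x) (\<lambda>x. \<Sum>i\<in>I. l i x) F"
  using assms
proof (induction I rule: finite_induct)
  case empty then show ?case by (simp add: uniform_limit_const)
next
  case (insert i I) then show ?case by (simp add: uniform_limit_add)
qed

lemma uniform_limit_sandwich:
  fixes f :: "nat \<Rightarrow> 'a \<Rightarrow> real"
  assumes "\<And>\<epsilon>. 0 < \<epsilon> \<Longrightarrow> \<exists>lo hi L1 L2. (\<forall>n x. lo n x \<le> f n x \<and> f n x \<le> hi n x)
      \<and> uniform_limit S lo (\<lambda>_. L1) sequentially \<and> uniform_limit S hi (\<lambda>_. L2) sequentially
      \<and> t - \<epsilon> \<le> L1 \<and> L2 \<le> t + \<epsilon>"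
  shows "uniform_limit S f (\<lambda>_. t) sequentially"
proof (rule uniform_limitI)
  fix e :: real assume "0 < e"
  then have "0 < e / 2" by simp
  then obtain lo hi L1 L2 where bounds: "\<And>n x. lo n x \<le> f n x" "\<And>n x. f n x \<le> hi n x"
    and lim: "uniform_limit S lo (\<lambda>_. L1) sequentially" "uniform_limit S hi (\<lambda>_. L2) sequentially"
    and L: "t - e / 2 \<le> L1" "L2 \<le> t + e / 2"
    using assms[of "e / 2"] by blast
  from uniform_limitD[OF lim(1) \<open>0 < e / 2\<close>] uniform_limitD[OF lim(2) \<open>0 < e / 2\<close>]
  show "\<forall>\<^sub>F n in sequentially. \<forall>x\<in>S. dist (f n x) t < e"
  proof eventually_elim
    case (elim n)
    show ?case
    proof
      fix x assume "x \<in> S"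
      then have "\<bar>lo n x - L1\<bar> < e / 2" "\<bar>hi n x - L2\<bar> < e / 2" using elim by (auto simp: dist_real_def)
      then show "dist (f n x) t < e"
        using bounds[of n x] L unfolding dist_real_def abs_less_iff by linarith
    qed
  qed
qed

lemma has_uniform_freq_iff:
  "has_uniform_freq u w \<rho> \<longleftrightarrow>
     uniform_limit UNIV (\<lambda>n j. real (occ_count u w j n) / real (Suc n)) (\<lambda>_. \<rho>) sequentially"
  unfolding has_uniform_freq_def uniform_limit_sequentially_iff dist_real_def by simp

lemma has_uniform_freq_iff_occ_starts:
  assumes "w \<noteq> []"
  shows "has_uniform_freq u w \<rho> \<longleftrightarrow>
     uniform_limit UNIV (\<lambda>n j. real (occ_starts u w j (Suc n)) / real (Suc n)) (\<lambda>_. \<rho>) sequentially"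
proof -
  have "\<bar>real (occ_starts u w j (Suc n)) / real (Suc n) - real (occ_count u w j n) / real (Suc n)\<bar>
      \<le> real (length w) / real (Suc n)" for j n
  proof -
    have "\<bar>real (occ_starts u w j (Suc n)) - real (occ_count u w j n)\<bar> \<le> real (length w)"
      using occ_count_le_occ_starts[OF assms, of u j n] occ_starts_le_occ_count[of u w j n] by linarith
    then show ?thesis by (simp add: diff_divide_distrib[symmetric] divide_right_mono)
  qed
  then show ?thesis
    unfolding has_uniform_freq_iff
    by (auto intro: uniform_limit_perturb[where C = "real (length w)"] simp: abs_minus_commute)
qed

lemma canonical_imp_uniform_limit:
  assumes "canonical a" "0 \<le> t" "t \<le> 1"
  shows "uniform_limit UNIV (\<lambda>n j. real (card {k. k < Suc n \<and> a (j + k) < t}) / real (Suc n)) (\<lambda>_. t) sequentially"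
proof -
  have "uniform_limit UNIV (\<lambda>n j. real (card {k. k < n \<and> a (j + k) < t}) / real n) (\<lambda>_. t) sequentially"
    using assms unfolding canonical_def uniform_limit_sequentially_iff dist_real_def by auto
  from filterlim_sequentially_Suc[THEN iffD2, OF this] show ?thesis by (simp only:)
qed

section \<open>Uniform frequencies from a canonical representative\<close>

lemma card_le_1_if_inj:
  fixes a :: "nat \<Rightarrow> real"
  assumes "inj a"
  shows "card {k. k < n \<and> a (j + k) = c} \<le> 1"
  using assms by (auto simp: card_le_Suc0_iff_eq dest: injD)

lemma card_le_Suc_if_subset_Un:
  assumes "finite B" "finite C" "A \<subseteq> B \<union> C" "card C \<le> 1"
  shows "card A \<le> card B + 1"
proof -
  have "card A \<le> card (B \<union> C)" using assms(1-3) by (intro card_mono) auto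
  also have "\<dots> \<le> card B + card C" by (rule card_Un_le)
  finally show ?thesis using assms(4) by linarith
qed

lemma card_window_between:
  fixes a :: "nat \<Rightarrow> real"
  assumes inj: "inj a" and "\<alpha> \<le> \<beta>"
    and inner: "{k. \<alpha> < a k \<and> a k < \<beta>} \<subseteq> S" and outer: "S \<subseteq> {k. \<alpha> \<le> a k \<and> a k \<le> \<beta>}"
  shows "\<bar>real (card {k. k < n \<and> j + k \<in> S})
           - (real (card {k. k < n \<and> a (j + k) < \<beta>}) - real (card {k. k < n \<and> a (j + k) < \<alpha>}))\<bar> \<le> 1"
proof -
  define below where "below t = {k. k < n \<and> a (j + k) < t}" for t
  define hit where "hit t = {k. k < n \<and> a (j + k) = t}" for t
  define Sw where "Sw = {k. k < n \<and> j + k \<in> S}"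
  define D where "D = {k. k < n \<and> \<alpha> \<le> a (j + k) \<and> a (j + k) < \<beta>}"
  have fin: "finite (below t)" "finite (hit t)" "finite Sw" "finite D" for t
    unfolding below_def hit_def Sw_def D_def by auto
  have hit1: "card (hit t) \<le> 1" for t unfolding hit_def by (rule card_le_1_if_inj[OF inj])
  have "below \<beta> = below \<alpha> \<union> D" "below \<alpha> \<inter> D = {}"
    unfolding below_def D_def using \<open>\<alpha> \<le> \<beta>\<close> by auto
  then have "card (below \<beta>) = card (below \<alpha>) + card D" using fin by (simp add: card_Un_disjoint)
  moreover have "D \<subseteq> Sw \<union> hit \<alpha>" unfolding D_def Sw_def hit_def using inner by auto
  then have "card D \<le> card Sw + 1" using fin hit1 by (intro card_le_Suc_if_subset_Un)
  moreover have "Sw \<subseteq> D \<union> hit \<beta>" unfolding D_def Sw_def hit_def using outer by fastforce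
  then have "card Sw \<le> card D + 1" using fin hit1 by (intro card_le_Suc_if_subset_Un)
  ultimately show ?thesis unfolding below_def Sw_def by linarith
qed

lemma canonical_window_between:
  assumes can: "canonical a" and "0 \<le> \<alpha>" "\<alpha> \<le> \<beta>" "\<beta> \<le> 1"
    and "{k. \<alpha> < a k \<and> a k < \<beta>} \<subseteq> S" "S \<subseteq> {k. \<alpha> \<le> a k \<and> a k \<le> \<beta>}"
  shows "uniform_limit UNIV (\<lambda>n j. real (card {k. k < Suc n \<and> j + k \<in> S}) / real (Suc n))
           (\<lambda>_. \<beta> - \<alpha>) sequentially"
proof (rule uniform_limit_perturb[where C = 1])
  show "uniform_limit UNIV (\<lambda>n j. real (card {k. k < Suc n \<and> a (j + k) < \<beta>}) / real (Suc n)
           - real (card {k. k < Suc n \<and> a (j + k) < \<alpha>}) / real (Suc n)) (\<lambda>_. \<beta> - \<alpha>) sequentially"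
    using assms by (intro uniform_limit_minus canonical_imp_uniform_limit) auto
  have "inj a" using can unfolding canonical_def by blast
  from abs_diff_divide_Suc_le[OF card_window_between[OF this assms(3,5,6)]]
  show "\<bar>real (card {k. k < Suc n \<and> j + k \<in> S}) / real (Suc n)
         - (real (card {k. k < Suc n \<and> a (j + k) < \<beta>}) / real (Suc n)
            - real (card {k. k < Suc n \<and> a (j + k) < \<alpha>}) / real (Suc n))\<bar> \<le> 1 / real (Suc n)" for n j
    by (simp only: diff_divide_distrib)
qed

lemma occurs_at_between_valid_perm:
  assumes ord: "\<forall>i j. a i < a j \<longleftrightarrow> valid_perm u i j"
    and "occurs_at w u k1" "occurs_at w u k2" "a k1 < a k" "a k < a k2"
  shows "occurs_at w u k"
proof -
  have "lex_less (shift k1 u) (shift k u)" "lex_less (shift k u) (shift k2 u)"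
    using ord assms(4,5) unfolding valid_perm_def by auto
  then show ?thesis
    using occurs_at_lex_between[of w "shift k1 u" "shift k2 u" "shift k u"] assms(2,3)
    unfolding occurs_at_shift by blast
qed

text \<open>The occurrences of w are, up to the two endpoints, the positions k with a k in the
  interval [\<alpha>, \<beta>] spanned by them; canonicity turns \<beta> - \<alpha> into their frequency.\<close>

theorem uniform_freq_if_canonical:
  assumes can: "canonical a" and ord: "\<forall>i j. a i < a j \<longleftrightarrow> valid_perm u i j"
    and "recurrent u" "w \<noteq> []" "factor w u"
  shows "\<exists>\<rho>. has_uniform_freq u w \<rho> \<and> \<rho> \<noteq> 0"
proof -
  define S where "S = {k. occurs_at w u k}"
  have "infinite S" using assms(3,5) unfolding recurrent_def S_def by auto
  then obtain k1 where "k1 \<in> S" using infinite_imp_nonempty by blast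
  moreover have "infinite (S - {k1})" using \<open>infinite S\<close> by simp
  then obtain k2 where "k2 \<in> S - {k1}" using infinite_imp_nonempty by blast
  ultimately have k: "k1 \<in> S" "k2 \<in> S" "k1 \<noteq> k2" by auto
  have inj: "inj a" and a01: "\<And>i. 0 \<le> a i \<and> a i \<le> 1" using can unfolding canonical_def by auto
  define \<alpha> where "\<alpha> = Inf (a ` S)"
  define \<beta> where "\<beta> = Sup (a ` S)"
  have ne: "a ` S \<noteq> {}" using k by auto
  have bdd: "bdd_below (a ` S)" "bdd_above (a ` S)" using a01 by (auto intro!: bdd_belowI[of _ 0] bdd_aboveI[of _ 1])
  have lo: "\<alpha> \<le> a k" and hi: "a k \<le> \<beta>" if "k \<in> S" for k
    unfolding \<alpha>_def \<beta>_def using bdd that by (auto intro: cInf_lower cSup_upper)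
  have "a k1 \<noteq> a k2" using inj k by (auto dest: injD)
  then have "\<alpha> < \<beta>" using lo[OF k(1)] lo[OF k(2)] hi[OF k(1)] hi[OF k(2)] by linarith
  have "0 \<le> \<alpha>" "\<beta> \<le> 1" unfolding \<alpha>_def \<beta>_def using ne a01 by (auto intro: cInf_greatest cSup_least)
  have inner: "k \<in> S" if between: "\<alpha> < a k" "a k < \<beta>" for k
  proof -
    obtain x1 where x1: "x1 \<in> S" "a x1 < a k" using between(1) cInf_less_iff[OF ne bdd(1)] unfolding \<alpha>_def by auto
    obtain x2 where x2: "x2 \<in> S" "a k < a x2" using between(2) less_cSup_iff[OF ne bdd(2)] unfolding \<beta>_def by auto
    show ?thesis using occurs_at_between_valid_perm[OF ord] x1 x2 unfolding S_def by blast
  qed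
  have "uniform_limit UNIV (\<lambda>n j. real (card {k. k < Suc n \<and> j + k \<in> S}) / real (Suc n))
      (\<lambda>_. \<beta> - \<alpha>) sequentially"
    by (rule canonical_window_between[OF can \<open>0 \<le> \<alpha>\<close> _ \<open>\<beta> \<le> 1\<close>]) (use inner lo hi \<open>\<alpha> < \<beta>\<close> in auto)
  then have "uniform_limit UNIV (\<lambda>n j. real (occ_starts u w j (Suc n)) / real (Suc n)) (\<lambda>_. \<beta> - \<alpha>) sequentially"
    unfolding occ_starts_def S_def by simp
  then show ?thesis
    using \<open>\<alpha> < \<beta>\<close> has_uniform_freq_iff_occ_starts[OF \<open>w \<noteq> []\<close>] by (intro exI[of _ "\<beta> - \<alpha>"]) auto
qed

section \<open>Frequencies of cylinders\<close>

text \<open>The limit is unspecified where the averages diverge; freq_eqI identifies freq u w with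
  any uniform frequency of w.\<close>

definition freq :: "(nat \<Rightarrow> nat) \<Rightarrow> nat list \<Rightarrow> real" where
  "freq u w = lim (\<lambda>n. real (occ_count u w 0 n) / real (Suc n))"

lemma has_uniform_freq_tendsto:
  "has_uniform_freq u w \<rho> \<Longrightarrow> (\<lambda>n. real (occ_count u w 0 n) / real (Suc n)) \<longlonglongrightarrow> \<rho>"
  unfolding has_uniform_freq_iff by (drule tendsto_uniform_limitI[of _ _ _ _ 0]) auto

lemma freq_eqI: "has_uniform_freq u w \<rho> \<Longrightarrow> freq u w = \<rho>"
  unfolding freq_def by (rule limI) (rule has_uniform_freq_tendsto)

lemma has_uniform_freq_nonneg: "has_uniform_freq u w \<rho> \<Longrightarrow> 0 \<le> \<rho>"
  by (rule LIMSEQ_le_const[OF has_uniform_freq_tendsto]) auto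

lemma has_uniform_freq_Nil: "has_uniform_freq u [] 1"
  unfolding has_uniform_freq_iff
proof (rule uniform_limit_perturb[where C = 1])
  show "uniform_limit UNIV (\<lambda>n j. 1) (\<lambda>_. 1) sequentially" by (rule uniform_limit_const)
  have "real (occ_count u [] j n) / real (Suc n) - 1 = 1 / real (Suc n)" for j n
    by (simp add: occ_count_Nil field_simps)
  then show "\<bar>real (occ_count u [] j n) / real (Suc n) - 1\<bar> \<le> 1 / real (Suc n)" for j n by simp
qed

lemma has_uniform_freq_nonfactor: "\<not> factor w u \<Longrightarrow> has_uniform_freq u w 0"
  unfolding has_uniform_freq_iff by (simp add: occ_count_nonfactor) (rule uniform_limit_const)

lemma occ_count_snoc_sum:
  assumes letters: "\<forall>n. u n < q"
  shows "(\<Sum>c<q. occ_count u (w @ [c]) j n) \<le> occ_count u w j n"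
    and "occ_count u w j n \<le> (\<Sum>c<q. occ_count u (w @ [c]) j n) + 1"
proof -
  define S where "S c = {p. j \<le> p \<and> p + length (w @ [c]) \<le> j + n + 1 \<and> occurs_at (w @ [c]) u p}" for c
  define T where "T = {p. j \<le> p \<and> p + length w \<le> j + n + 1 \<and> occurs_at w u p}"
  have finS: "finite (S c)" for c unfolding S_def by (rule finite_subset[of _ "{..j + n + 1}"]) auto
  have finT: "finite T" unfolding T_def by (rule finite_subset[of _ "{..j + n + 1}"]) auto
  have sum_S: "(\<Sum>c<q. card (S c)) = card (\<Union>c<q. S c)"
    using finS by (intro card_UN_disjoint[symmetric]) (auto simp: S_def occurs_at_snoc)
  have U: "(\<Union>c<q. S c) = {p \<in> T. p + length w + 1 \<le> j + n + 1}"
    unfolding S_def T_def occurs_at_snoc using letters by auto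
  have "card (\<Union>c<q. S c) \<le> card T" unfolding U using finT by (intro card_mono) auto
  moreover have "card T \<le> card (\<Union>c<q. S c) + 1"
  proof -
    have "T \<subseteq> (\<Union>c<q. S c) \<union> {j + n + 1 - length w}" unfolding U T_def by auto
    then have "card T \<le> card ((\<Union>c<q. S c) \<union> {j + n + 1 - length w})" using finS by (intro card_mono) auto
    then show ?thesis using card_Un_le[of "\<Union>c<q. S c" "{j + n + 1 - length w}"] by simp
  qed
  moreover have "occ_count u (w @ [c]) j n = card (S c)" "occ_count u w j n = card T" for c
    unfolding occ_count_def S_def T_def by auto
  ultimately show "(\<Sum>c<q. occ_count u (w @ [c]) j n) \<le> occ_count u w j n"
    and "occ_count u w j n \<le> (\<Sum>c<q. occ_count u (w @ [c]) j n) + 1" using sum_S by auto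
qed

locale uniform_frequencies =
  fixes u :: "nat \<Rightarrow> nat" and q :: nat
  assumes letters: "\<forall>n. u n < q"
    and uniform_freq: "\<forall>w. w \<noteq> [] \<and> factor w u \<longrightarrow> (\<exists>\<rho>. has_uniform_freq u w \<rho> \<and> \<rho> \<noteq> 0)"
begin

lemma has_uniform_freq_freq: "has_uniform_freq u w (freq u w)"
proof -
  have "\<exists>\<rho>. has_uniform_freq u w \<rho>"
  proof (cases "w \<noteq> [] \<and> factor w u")
    case True then show ?thesis using uniform_freq by blast
  next
    case False then show ?thesis by (metis has_uniform_freq_Nil has_uniform_freq_nonfactor)
  qed
  then show ?thesis using freq_eqI by auto
qed

lemma freq_nonneg: "0 \<le> freq u w"
  by (rule has_uniform_freq_nonneg[OF has_uniform_freq_freq])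

lemma freq_Nil [simp]: "freq u [] = 1"
  by (rule freq_eqI[OF has_uniform_freq_Nil])

lemma freq_pos:
  assumes "factor w u"
  shows "0 < freq u w"
proof (cases "w = []")
  case False
  then obtain \<rho> where "has_uniform_freq u w \<rho>" "\<rho> \<noteq> 0" using uniform_freq assms by blast
  then show ?thesis using freq_eqI has_uniform_freq_nonneg by force
qed simp

lemma freq_eq_sum_snoc: "freq u w = (\<Sum>c<q. freq u (w @ [c]))"
proof -
  have "uniform_limit UNIV (\<lambda>n j. \<Sum>c<q. real (occ_count u (w @ [c]) j n) / real (Suc n))
          (\<lambda>_. \<Sum>c<q. freq u (w @ [c])) sequentially"
    using has_uniform_freq_freq unfolding has_uniform_freq_iff by (intro uniform_limit_sum) auto
  then have "uniform_limit UNIV (\<lambda>n j. real (occ_count u w j n) / real (Suc n))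
          (\<lambda>_. \<Sum>c<q. freq u (w @ [c])) sequentially"
  proof (rule uniform_limit_perturb[where C = 1])
    fix n j
    have "\<bar>real (occ_count u w j n) - real (\<Sum>c<q. occ_count u (w @ [c]) j n)\<bar> \<le> 1"
      using occ_count_snoc_sum[OF letters, of w j n] by linarith
    then show "\<bar>real (occ_count u w j n) / real (Suc n) - (\<Sum>c<q. real (occ_count u (w @ [c]) j n) / real (Suc n))\<bar>
        \<le> 1 / real (Suc n)"
      by (simp add: sum_divide_distrib[symmetric] diff_divide_distrib[symmetric] divide_right_mono)
  qed
  then show ?thesis unfolding has_uniform_freq_iff[symmetric] by (rule freq_eqI)
qed

end

section \<open>The mass below a shift\<close>

text \<open>The value of the canonical representative at k is the frequency mass of all
  words lexicographically below T^k u, collected along the branch of T^k u: at depth m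
  the siblings with a smaller letter contribute branch_mass, those with a larger one
  branch_mass_above.\<close>

definition branch_mass :: "(nat \<Rightarrow> nat) \<Rightarrow> nat \<Rightarrow> nat \<Rightarrow> real" where
  "branch_mass u k m = (\<Sum>c<u (k + m). freq u (prefix_at u k m @ [c]))"

definition branch_mass_above :: "(nat \<Rightarrow> nat) \<Rightarrow> nat \<Rightarrow> nat \<Rightarrow> nat \<Rightarrow> real" where
  "branch_mass_above u q k m = (\<Sum>c\<in>{u (k + m)<..<q}. freq u (prefix_at u k m @ [c]))"

definition mass_below :: "(nat \<Rightarrow> nat) \<Rightarrow> nat \<Rightarrow> real" where
  "mass_below u k = (\<Sum>m. branch_mass u k m)"

definition freq_below :: "(nat \<Rightarrow> nat) \<Rightarrow> nat list \<Rightarrow> real" where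
  "freq_below u w = (\<Sum>m<length w. \<Sum>c<w ! m. freq u (take m w @ [c]))"

lemma freq_below_Nil [simp]: "freq_below u [] = 0"
  unfolding freq_below_def by simp

lemma freq_below_snoc: "freq_below u (w @ [c]) = freq_below u w + (\<Sum>c'<c. freq u (w @ [c']))"
proof -
  have "(\<Sum>m<length w. \<Sum>c'<(w @ [c]) ! m. freq u (take m (w @ [c]) @ [c'])) = freq_below u w"
    unfolding freq_below_def by (intro sum.cong) (auto simp: nth_append)
  then show ?thesis unfolding freq_below_def by simp
qed

lemma freq_below_prefix_at: "freq_below u (prefix_at u k M) = (\<Sum>m<M. branch_mass u k m)"
  unfolding freq_below_def branch_mass_def by (intro sum.cong) (auto simp: take_prefix_at nth_prefix_at)

context uniform_frequencies
begin

lemma branch_mass_nonneg: "0 \<le> branch_mass u k m"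
  unfolding branch_mass_def by (intro sum_nonneg freq_nonneg)

lemma branch_mass_above_nonneg: "0 \<le> branch_mass_above u q k m"
  unfolding branch_mass_above_def by (intro sum_nonneg freq_nonneg)

lemma freq_prefix_at_split:
  "freq u (prefix_at u k m) = branch_mass u k m + freq u (prefix_at u k (Suc m)) + branch_mass_above u q k m"
proof -
  define x where "x = u (k + m)"
  define f where "f c = freq u (prefix_at u k m @ [c])" for c
  have "x < q" using letters unfolding x_def by auto
  then have "{..<q} = {..<x} \<union> ({x} \<union> {x<..<q})" by auto
  moreover have "{..<x} \<inter> ({x} \<union> {x<..<q}) = {}" "{x} \<inter> {x<..<q} = {}" by auto
  ultimately have "(\<Sum>c<q. f c) = (\<Sum>c<x. f c) + f x + (\<Sum>c\<in>{x<..<q}. f c)"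
    by (simp add: sum.union_disjoint)
  then show ?thesis
    unfolding branch_mass_def branch_mass_above_def prefix_at_Suc freq_eq_sum_snoc[of "prefix_at u k m"]
      x_def f_def .
qed

lemma freq_prefix_at_telescope:
  "m0 \<le> N \<Longrightarrow> (\<Sum>m\<in>{m0..<N}. branch_mass u k m + branch_mass_above u q k m) + freq u (prefix_at u k N)
     = freq u (prefix_at u k m0)"
proof (induction N rule: dec_induct)
  case (step N) then show ?case using freq_prefix_at_split[of k N] by simp
qed simp

lemma summable_branch_mass: "summable (branch_mass u k)"
proof (rule summableI_nonneg_bounded[where x = 1])
  fix n
  have "(\<Sum>i<n. branch_mass u k i) \<le> (\<Sum>m\<in>{0..<n}. branch_mass u k m + branch_mass_above u q k m)"
    using branch_mass_above_nonneg by (simp add: atLeast0LessThan sum_mono)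
  then show "(\<Sum>i<n. branch_mass u k i) \<le> 1"
    using freq_prefix_at_telescope[of 0 n k] freq_nonneg[of "prefix_at u k n"] by simp
qed (rule branch_mass_nonneg)

lemma mass_below_split:
  "mass_below u k = freq_below u (prefix_at u k M) + (\<Sum>n. branch_mass u k (n + M))"
  unfolding mass_below_def freq_below_prefix_at
  using suminf_split_initial_segment[OF summable_branch_mass, of k M] by simp

lemma branch_mass_le_tail: "M \<le> m \<Longrightarrow> branch_mass u k m \<le> (\<Sum>n. branch_mass u k (n + M))"
  using sum_le_suminf[of "\<lambda>n. branch_mass u k (n + M)" "{m - M}"] summable_branch_mass
  by (simp add: branch_mass_nonneg)

lemma tail_plus_branch_mass_above_le:
  assumes "M \<le> m"
  shows "(\<Sum>n. branch_mass u k (n + M)) + branch_mass_above u q k m \<le> freq u (prefix_at u k M)"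
proof -
  have "(\<lambda>N. \<Sum>n<N. branch_mass u k (n + M)) \<longlonglongrightarrow> (\<Sum>n. branch_mass u k (n + M))"
    using summable_branch_mass by (intro summable_LIMSEQ) simp
  moreover have "\<forall>N\<ge>Suc (m - M). (\<Sum>n<N. branch_mass u k (n + M)) \<le> freq u (prefix_at u k M) - branch_mass_above u q k m"
  proof (intro allI impI)
    fix N assume "Suc (m - M) \<le> N"
    have "(\<Sum>n<N. branch_mass u k (n + M)) = (\<Sum>i\<in>{M..<M + N}. branch_mass u k i)"
      using sum.shift_bounds_nat_ivl[of "branch_mass u k" 0 M N] by (simp add: atLeast0LessThan add.commute)
    moreover have "branch_mass_above u q k m \<le> (\<Sum>i\<in>{M..<M + N}. branch_mass_above u q k i)"
      using \<open>Suc (m - M) \<le> N\<close> assms by (intro member_le_sum branch_mass_above_nonneg) auto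
    ultimately show "(\<Sum>n<N. branch_mass u k (n + M)) \<le> freq u (prefix_at u k M) - branch_mass_above u q k m"
      using freq_prefix_at_telescope[of M "M + N" k] freq_nonneg[of "prefix_at u k (M + N)"]
      by (simp add: sum.distrib)
  qed
  ultimately have "(\<Sum>n. branch_mass u k (n + M)) \<le> freq u (prefix_at u k M) - branch_mass_above u q k m"
    by (intro LIMSEQ_le_const2) blast+
  then show ?thesis by simp
qed

lemma mass_below_bounds:
  "freq_below u (prefix_at u k M) \<le> mass_below u k"
  "mass_below u k \<le> freq_below u (prefix_at u k M) + freq u (prefix_at u k M)"
  using mass_below_split[of k M] tail_plus_branch_mass_above_le[of M M k] branch_mass_above_nonneg[of k M]
    suminf_nonneg[of "\<lambda>n. branch_mass u k (n + M)"] summable_branch_mass branch_mass_nonneg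
  by auto

lemma mass_below_01: "0 \<le> mass_below u k" "mass_below u k \<le> 1"
  using mass_below_bounds[of k 0] by auto

end

section \<open>Strict monotonicity of the mass below\<close>

lemma factor_branch:
  assumes "\<forall>s<p. u (k + s) = u (b + s)"
  shows "factor (prefix_at u b p @ [u (k + p)]) u"
  using factor_prefix_at[of u k "Suc p"] prefix_at_cong[OF assms] by (simp add: prefix_at_Suc)

text \<open>Recurrence and aperiodicity force the branch of T^a u to meet, beyond any depth m,
  a sibling that is a factor: another occurrence of a long prefix of T^a u must eventually
  leave it. R abstracts over the direction, so that the statement covers both a larger
  sibling at a and a smaller one at a + d (and, for the reversed order, vice versa).\<close>

lemma branching:
  fixes R :: "nat \<Rightarrow> nat \<Rightarrow> bool"
  assumes "recurrent u" "aperiodic u" and R: "\<And>x y. x \<noteq> y \<Longrightarrow> R x y \<or> R y x"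
  shows "\<exists>p>m. (\<exists>c. R (u (a + p)) c \<and> factor (prefix_at u a p @ [c]) u)
             \<or> (\<exists>c. R c (u (a + d + p)) \<and> factor (prefix_at u (a + d) p @ [c]) u)"
proof -
  have "infinite {k. occurs_at (prefix_at u a (d + m + 2)) u k}"
    using assms(1) factor_prefix_at unfolding recurrent_def by blast
  then obtain k where k: "occurs_at (prefix_at u a (d + m + 2)) u k" "k \<noteq> a"
    using infinite_imp_nonempty[of "{k. occurs_at (prefix_at u a (d + m + 2)) u k} - {a}"] by auto
  obtain p where p: "\<forall>s<p. u (k + s) = u (a + s)" "u (k + p) \<noteq> u (a + p)"
    using first_difference[OF aperiodic_shift_neq[OF assms(2) k(2)]] unfolding shift_def by metis
  have "d + m + 2 \<le> p"
  proof (rule ccontr)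
    assume "\<not> d + m + 2 \<le> p"
    then have "u (k + p) = u (a + p)" using k(1) unfolding occurs_at_def by (simp add: nth_prefix_at)
    then show False using p(2) by simp
  qed
  show ?thesis
  proof (cases "R (u (a + p)) (u (k + p))")
    case True
    then show ?thesis using factor_branch[OF p(1)] \<open>d + m + 2 \<le> p\<close> by (intro exI[of _ p]) auto
  next
    case False
    then have "R (u (k + p)) (u (a + d + (p - d)))" using R p(2) \<open>d + m + 2 \<le> p\<close> by fastforce
    moreover have "\<forall>s<p - d. u (k + d + s) = u (a + d + s)" using p(1) by (simp add: add.assoc)
    moreover have "k + d + (p - d) = k + p" using \<open>d + m + 2 \<le> p\<close> by simp
    ultimately show ?thesis using factor_branch[of "p - d" u "k + d" "a + d"] \<open>d + m + 2 \<le> p\<close>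
      by (intro exI[of _ "p - d"]) auto
  qed
qed

lemma branching_between:
  assumes "recurrent u" "aperiodic u" "i \<noteq> j"
  shows "\<exists>p>m. (\<exists>c>u (i + p). factor (prefix_at u i p @ [c]) u)
             \<or> (\<exists>c<u (j + p). factor (prefix_at u j p @ [c]) u)"
proof (cases "i < j")
  case True
  have R: "\<And>x y :: nat. x \<noteq> y \<Longrightarrow> x < y \<or> y < x" by auto
  from branching[where R = "(<)" and m = m and a = i and d = "j - i", OF assms(1,2) R] True
  show ?thesis by simp
next
  case False
  have R: "\<And>x y :: nat. x \<noteq> y \<Longrightarrow> x > y \<or> y > x" by auto
  from branching[where R = "(>)" and m = m and a = j and d = "i - j", OF assms(1,2) R] False assms(3)
  show ?thesis by auto
qed

locale recurrent_uniform_frequencies = uniform_frequencies +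
  assumes recurrent: "recurrent u" and aperiodic: "aperiodic u"
begin

lemma branch_mass_pos_beyond:
  assumes "i \<noteq> j"
  shows "\<exists>m'>m. 0 < branch_mass_above u q i m' + branch_mass u j m'"
proof -
  obtain m' where "m < m'" and sibling: "(\<exists>c>u (i + m'). factor (prefix_at u i m' @ [c]) u)
      \<or> (\<exists>c<u (j + m'). factor (prefix_at u j m' @ [c]) u)"
    using branching_between[OF recurrent aperiodic assms] by blast
  from sibling have "0 < branch_mass_above u q i m' + branch_mass u j m'"
  proof
    assume "\<exists>c>u (i + m'). factor (prefix_at u i m' @ [c]) u"
    then obtain c where c: "u (i + m') < c" "factor (prefix_at u i m' @ [c]) u" by blast
    then have "c < q" using letters unfolding factor_def occurs_at_snoc by auto
    then have "0 < branch_mass_above u q i m'"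
      unfolding branch_mass_above_def using c freq_pos freq_nonneg by (intro sum_pos2[of _ c]) auto
    then show ?thesis using branch_mass_nonneg[of j m'] by linarith
  next
    assume "\<exists>c<u (j + m'). factor (prefix_at u j m' @ [c]) u"
    then obtain c where c: "c < u (j + m')" "factor (prefix_at u j m' @ [c]) u" by blast
    then have "0 < branch_mass u j m'"
      unfolding branch_mass_def using freq_pos freq_nonneg by (intro sum_pos2[of _ c]) auto
    then show ?thesis using branch_mass_above_nonneg[of i m'] by linarith
  qed
  with \<open>m < m'\<close> show ?thesis by blast
qed

text \<open>Up to the first difference m both masses agree; the smaller letter of T^i u at m costs
  at least the whole cylinder of T^i u below depth m, and the branching beyond m makes the
  inequality strict.\<close>

lemma mass_below_strict_mono:
  assumes "lex_less (shift i u) (shift j u)"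
  shows "mass_below u i < mass_below u j"
proof -
  obtain m where eq: "\<forall>s<m. u (i + s) = u (j + s)" and lt: "u (i + m) < u (j + m)"
    using assms unfolding lex_less_def shift_def by auto
  have prefix_eq: "prefix_at u i m = prefix_at u j m" using eq by (rule prefix_at_cong)
  have split: "mass_below u k = freq_below u (prefix_at u k m) + branch_mass u k m + (\<Sum>n. branch_mass u k (n + Suc m))"
    for k using mass_below_split[of k "Suc m"] by (simp add: freq_below_prefix_at freq_below_def[symmetric])
  have "branch_mass u i m + freq u (prefix_at u i (Suc m)) = (\<Sum>c<Suc (u (i + m)). freq u (prefix_at u j m @ [c]))"
    unfolding branch_mass_def prefix_at_Suc prefix_eq by simp
  also have "\<dots> \<le> branch_mass u j m"
    unfolding branch_mass_def using lt by (intro sum_mono2) (auto simp: freq_nonneg)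
  finally have step: "branch_mass u i m + freq u (prefix_at u i (Suc m)) \<le> branch_mass u j m" .
  have "i \<noteq> j" using lt by auto
  then obtain m' where "m < m'" and pos: "0 < branch_mass_above u q i m' + branch_mass u j m'"
    using branch_mass_pos_beyond by blast
  have tail_i: "(\<Sum>n. branch_mass u i (n + Suc m)) + branch_mass_above u q i m' \<le> freq u (prefix_at u i (Suc m))"
    by (rule tail_plus_branch_mass_above_le) (use \<open>m < m'\<close> in simp)
  have tail_j: "branch_mass u j m' \<le> (\<Sum>n. branch_mass u j (n + Suc m))"
    by (rule branch_mass_le_tail) (use \<open>m < m'\<close> in simp)
  have "freq_below u (prefix_at u i m) = freq_below u (prefix_at u j m)" using prefix_eq by simp
  then show ?thesis using split[of i] split[of j] step tail_i tail_j pos by linarith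
qed

lemma mass_below_less_iff: "mass_below u i < mass_below u j \<longleftrightarrow> valid_perm u i j"
proof
  assume less: "mass_below u i < mass_below u j"
  then have "i \<noteq> j" by auto
  then have "shift i u \<noteq> shift j u" by (rule aperiodic_shift_neq[OF aperiodic])
  then consider "lex_less (shift i u) (shift j u)" | "lex_less (shift j u) (shift i u)"
    using lex_less_total by blast
  then show "valid_perm u i j"
  proof cases
    case 2
    then show ?thesis using mass_below_strict_mono[OF 2] less by linarith
  qed (simp add: valid_perm_def)
qed (simp add: valid_perm_def mass_below_strict_mono)

lemma inj_mass_below: "inj (mass_below u)"
proof (rule injI, rule ccontr)
  fix i j assume eq: "mass_below u i = mass_below u j" and "i \<noteq> j"
  then have "lex_less (shift i u) (shift j u) \<or> lex_less (shift j u) (shift i u)"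
    using aperiodic_shift_neq[OF aperiodic] lex_less_total by blast
  then have "mass_below u i < mass_below u j \<or> mass_below u j < mass_below u i"
    using mass_below_strict_mono by blast
  then show False using eq by simp
qed

end

section \<open>Long words have small frequencies\<close>

lemma syndetic_if_uniform_freq_pos:
  assumes "has_uniform_freq u w \<rho>" "0 < \<rho>"
  shows "\<exists>N. \<forall>i. \<exists>p. i \<le> p \<and> p + length w \<le> i + N + 1 \<and> occurs_at w u p"
proof -
  obtain N where "\<forall>n\<ge>N. \<forall>i. \<bar>real (occ_count u w i n) / real (n + 1) - \<rho>\<bar> < \<rho>"
    using assms unfolding has_uniform_freq_def by blast
  then have close: "\<bar>real (occ_count u w i N) / real (N + 1) - \<rho>\<bar> < \<rho>" for i by blast
  have "occ_count u w i N \<noteq> 0" for i using close[of i] by (cases "occ_count u w i N = 0") auto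
  then have "{p. i \<le> p \<and> p + length w \<le> i + N + 1 \<and> occurs_at w u p} \<noteq> {}" for i
    unfolding occ_count_def by (metis card.empty)
  then show ?thesis by blast
qed

lemma card_le_if_separated:
  fixes S :: "nat set"
  assumes "S \<subseteq> {..n}" and sep: "\<And>x y. x \<in> S \<Longrightarrow> y \<in> S \<Longrightarrow> x < y \<Longrightarrow> D < y - x"
  shows "card S \<le> n div Suc D + 1"
proof -
  have "x div Suc D \<noteq> y div Suc D" if "x \<in> S" "y \<in> S" "x < y" for x y
  proof
    assume "x div Suc D = y div Suc D"
    then have "x div Suc D * Suc D = y div Suc D * Suc D" by simp
    then have "y - x \<le> D"
      using div_mult_mod_eq[of x "Suc D"] div_mult_mod_eq[of y "Suc D"]
        mod_less_divisor[OF zero_less_Suc, of x D] mod_less_divisor[OF zero_less_Suc, of y D] \<open>x < y\<close>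
      by linarith
    then show False using sep[OF that] by simp
  qed
  then have "inj_on (\<lambda>x. x div Suc D) S"
    by (intro inj_onI) (metis linorder_neq_iff)
  then have "card S = card ((\<lambda>x. x div Suc D) ` S)" by (simp add: card_image)
  also have "\<dots> \<le> card {..n div Suc D}" using assms(1) by (intro card_mono) (auto intro: div_le_mono)
  finally show ?thesis by simp
qed

lemma (in uniform_frequencies) freq_le_if_separated:
  assumes "w \<noteq> []" and sep: "\<And>x y. occurs_at w u x \<Longrightarrow> occurs_at w u y \<Longrightarrow> x < y \<Longrightarrow> D < y - x"
  shows "freq u w \<le> inverse (real (Suc D))"
proof -
  have "real (occ_count u w 0 n) / real (Suc n) \<le> inverse (real (Suc D)) + inverse (real (Suc n))" for n
  proof -
    have "occ_count u w 0 n \<le> n div Suc D + 1"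
      unfolding occ_count_def using sep \<open>w \<noteq> []\<close> by (intro card_le_if_separated) (auto simp: neq_Nil_conv)
    then have "real (occ_count u w 0 n) \<le> real (n div Suc D + 1)" by (rule of_nat_mono)
    also have "\<dots> \<le> real n / real (Suc D) + 1" using of_nat_div_le_of_nat[of n "Suc D"] by simp
    also have "\<dots> \<le> real (Suc n) * inverse (real (Suc D)) + 1" by (simp add: divide_inverse)
    finally have "real (occ_count u w 0 n) / real (Suc n)
        \<le> (real (Suc n) * inverse (real (Suc D)) + 1) / real (Suc n)" by (rule divide_right_mono) simp
    also have "\<dots> = inverse (real (Suc D)) + inverse (real (Suc n))" by (simp add: field_simps)
    finally show ?thesis .
  qed
  then show ?thesis
    using LIMSEQ_le[OF has_uniform_freq_tendsto[OF has_uniform_freq_freq] LIMSEQ_inverse_real_of_nat_add]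
    by auto
qed

context recurrent_uniform_frequencies
begin

text \<open>A word without period d has a defect of period d in every long enough window:
  the factor u[b..b+d] witnessing a defect has positive uniform frequency.\<close>

lemma period_defect_syndetic:
  assumes "0 < d"
  shows "\<exists>N. \<forall>i. \<exists>p. i \<le> p \<and> p + d \<le> i + N \<and> u (p + d) \<noteq> u p"
proof -
  obtain b where b: "u (b + d) \<noteq> u b" using aperiodic assms unfolding aperiodic_def by metis
  define w where "w = prefix_at u b (Suc d)"
  obtain N where N: "\<forall>i. \<exists>p. i \<le> p \<and> p + length w \<le> i + N + 1 \<and> occurs_at w u p"
    using syndetic_if_uniform_freq_pos[OF has_uniform_freq_freq freq_pos[OF factor_prefix_at]]
    unfolding w_def by blast
  have defect: "u (p + d) \<noteq> u p" if "occurs_at w u p" for p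
  proof -
    have "\<forall>k<Suc d. u (p + k) = u (b + k)" using that unfolding occurs_at_def w_def by (simp add: nth_prefix_at)
    then have "u p = u b" "u (p + d) = u (b + d)" using spec[of _ 0] spec[of _ d] by auto
    then show ?thesis using b by simp
  qed
  show ?thesis
  proof (rule exI[of _ N], intro allI)
    fix i
    obtain p where "i \<le> p" "p + length w \<le> i + N + 1" "occurs_at w u p" using N by blast
    then show "\<exists>p. i \<le> p \<and> p + d \<le> i + N \<and> u (p + d) \<noteq> u p"
      using defect unfolding w_def by (intro exI[of _ p]) auto
  qed
qed

text \<open>Two occurrences of a word of length M at distance d \<le> D would make d a period on
  M letters; a long word therefore occurs at most once in every D consecutive positions.\<close>

lemma freq_small: "0 < \<epsilon> \<Longrightarrow> \<exists>M0. \<forall>w. M0 \<le> length w \<longrightarrow> freq u w < \<epsilon>"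
proof -
  assume "0 < \<epsilon>"
  then obtain D :: nat where D: "inverse (real (Suc D)) < \<epsilon>" using reals_Archimedean by blast
  have "\<forall>d. \<exists>N. 0 < d \<longrightarrow> (\<forall>i. \<exists>p. i \<le> p \<and> p + d \<le> i + N \<and> u (p + d) \<noteq> u p)"
    using period_defect_syndetic by blast
  from choice[OF this] obtain Nd
    where Nd: "\<forall>d. 0 < d \<longrightarrow> (\<forall>i. \<exists>p. i \<le> p \<and> p + d \<le> i + Nd d \<and> u (p + d) \<noteq> u p)"
    by blast
  define L where "L = (\<Sum>d\<in>{1..D}. Nd d)"
  have "freq u w < \<epsilon>" if "Suc L \<le> length w" for w
  proof -
    have sep: "D < y - x" if "occurs_at w u x" "occurs_at w u y" "x < y" for x y
    proof (rule ccontr)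
      assume "\<not> D < y - x"
      then have d: "0 < y - x" "Nd (y - x) \<le> L" using \<open>x < y\<close> unfolding L_def by (auto intro: member_le_sum)
      then obtain p where p: "x \<le> p" "p + (y - x) \<le> x + Nd (y - x)" "u (p + (y - x)) \<noteq> u p"
        using Nd by blast
      define s where "s = p - x"
      have "s < length w" using p d \<open>Suc L \<le> length w\<close> unfolding s_def by linarith
      then have "u (x + s) = u (y + s)" using that(1,2) unfolding occurs_at_def by simp
      moreover have "x + s = p" "y + s = p + (y - x)" using p \<open>x < y\<close> unfolding s_def by auto
      ultimately show False using p(3) by simp
    qed
    then have "freq u w \<le> inverse (real (Suc D))"
      using \<open>Suc L \<le> length w\<close> by (intro freq_le_if_separated) auto
    then show ?thesis using D by linarith
  qed
  then show ?thesis by blast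
qed

end

section \<open>Equidistribution of the mass below\<close>

text \<open>part_below t a r is the length of [a, a + r] \<inter> (-\<infinity>, t] (for r \<ge> 0).\<close>

definition part_below :: "real \<Rightarrow> real \<Rightarrow> real \<Rightarrow> real" where
  "part_below t a r = min r (max 0 (t - a))"

lemma part_below_add:
  "0 \<le> R \<Longrightarrow> 0 \<le> r \<Longrightarrow> part_below t a R + part_below t (a + R) r = part_below t a (R + r)"
  unfolding part_below_def by (auto simp: min_def max_def)

lemma part_below_sum_consecutive:
  fixes f :: "nat \<Rightarrow> real"
  assumes "\<And>c. 0 \<le> f c"
  shows "(\<Sum>c<n. part_below t (a + (\<Sum>c'<c. f c')) (f c)) = part_below t a (\<Sum>c<n. f c)"
proof (induction n)
  case 0 then show ?case unfolding part_below_def by simp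
next
  case (Suc n)
  then show ?case using part_below_add[OF sum_nonneg assms, of "{..<n}" f t a] assms by simp
qed

lemma sum_le_if_card_le_1:
  fixes g :: "'a \<Rightarrow> real"
  assumes "finite X" "card X \<le> 1" "\<And>x. x \<in> X \<Longrightarrow> g x \<le> \<mu>" "0 \<le> \<mu>"
  shows "sum g X \<le> \<mu>"
proof -
  have "X = {} \<or> (\<exists>x. X = {x})" using assms(1,2) by (metis card_1_singletonE card_0_eq le_Suc_eq One_nat_def le_zero_eq)
  then show ?thesis using assms(3,4) by auto
qed

lemma card_straddling_le_1:
  fixes A \<rho> :: "'a \<Rightarrow> real"
  assumes "finite W"
    and disj: "\<And>w w'. w \<in> W \<Longrightarrow> w' \<in> W \<Longrightarrow> w \<noteq> w' \<Longrightarrow> A w + \<rho> w \<le> A w' \<or> A w' + \<rho> w' \<le> A w"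
  shows "card {w\<in>W. A w < t \<and> t \<le> A w + \<rho> w} \<le> 1"
proof -
  have fin: "finite {w\<in>W. A w < t \<and> t \<le> A w + \<rho> w}" using assms(1) by simp
  show ?thesis unfolding One_nat_def card_le_Suc0_iff_eq[OF fin]
  proof (intro ballI)
    fix w w' assume "w \<in> {w\<in>W. A w < t \<and> t \<le> A w + \<rho> w}" "w' \<in> {w\<in>W. A w < t \<and> t \<le> A w + \<rho> w}"
    then show "w = w'" using disj[of w w'] by force
  qed
qed

lemma sum_intervals_below:
  fixes A \<rho> :: "'a \<Rightarrow> real"
  assumes "finite W" and \<rho>: "\<And>w. w \<in> W \<Longrightarrow> 0 \<le> \<rho> w \<and> \<rho> w \<le> \<mu>" and "0 \<le> \<mu>"
    and disj: "\<And>w w'. w \<in> W \<Longrightarrow> w' \<in> W \<Longrightarrow> w \<noteq> w' \<Longrightarrow> A w + \<rho> w \<le> A w' \<or> A w' + \<rho> w' \<le> A w"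
  shows "(\<Sum>w\<in>W. part_below t (A w) (\<rho> w)) - \<mu> \<le> (\<Sum>w\<in>{w\<in>W. A w + \<rho> w < t}. \<rho> w)"
    and "(\<Sum>w\<in>{w\<in>W. A w < t}. \<rho> w) \<le> (\<Sum>w\<in>W. part_below t (A w) (\<rho> w)) + \<mu>"
proof -
  define Lo where "Lo = {w\<in>W. A w + \<rho> w < t}"
  define X where "X = {w\<in>W. A w < t \<and> t \<le> A w + \<rho> w}"
  define Hi where "Hi = {w\<in>W. t \<le> A w}"
  have fin: "finite Lo" "finite X" "finite Hi" unfolding Lo_def X_def Hi_def using \<open>finite W\<close> by auto
  have "card X \<le> 1" unfolding X_def using assms(1) disj by (rule card_straddling_le_1)
  have W: "W = Lo \<union> X \<union> Hi" "Lo \<inter> X = {}" "(Lo \<union> X) \<inter> Hi = {}"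
    unfolding Lo_def X_def Hi_def by (auto dest: \<rho>)
  have below: "{w\<in>W. A w < t} = Lo \<union> X" unfolding Lo_def X_def by (auto dest: \<rho>)
  have Lo: "(\<Sum>w\<in>Lo. part_below t (A w) (\<rho> w)) = (\<Sum>w\<in>Lo. \<rho> w)"
    unfolding Lo_def part_below_def using \<rho> by (intro sum.cong) auto
  have Hi: "(\<Sum>w\<in>Hi. part_below t (A w) (\<rho> w)) = 0"
    unfolding Hi_def part_below_def using \<rho> by (intro sum.neutral) auto
  have part_X: "0 \<le> part_below t (A w) (\<rho> w) \<and> part_below t (A w) (\<rho> w) \<le> \<mu>" if "w \<in> X" for w
    using that \<rho>[of w] unfolding X_def part_below_def by auto
  have \<rho>_X: "0 \<le> \<rho> w \<and> \<rho> w \<le> \<mu>" if "w \<in> X" for w using that \<rho> unfolding X_def by auto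
  have X1: "0 \<le> (\<Sum>w\<in>X. part_below t (A w) (\<rho> w))" "0 \<le> (\<Sum>w\<in>X. \<rho> w)"
    using part_X \<rho>_X by (auto intro: sum_nonneg)
  have X2: "(\<Sum>w\<in>X. part_below t (A w) (\<rho> w)) \<le> \<mu>" "(\<Sum>w\<in>X. \<rho> w) \<le> \<mu>"
    using part_X \<rho>_X \<open>0 \<le> \<mu>\<close> by (auto intro!: sum_le_if_card_le_1[OF fin(2) \<open>card X \<le> 1\<close>])
  have "(\<Sum>w\<in>W. part_below t (A w) (\<rho> w)) = (\<Sum>w\<in>Lo. part_below t (A w) (\<rho> w))
      + (\<Sum>w\<in>X. part_below t (A w) (\<rho> w)) + (\<Sum>w\<in>Hi. part_below t (A w) (\<rho> w))"
    unfolding W(1) using fin W(2,3) by (simp add: sum.union_disjoint)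
  moreover have "(\<Sum>w\<in>{w\<in>W. A w < t}. \<rho> w) = (\<Sum>w\<in>Lo. \<rho> w) + (\<Sum>w\<in>X. \<rho> w)"
    unfolding below using fin W(2) by (simp add: sum.union_disjoint)
  ultimately show "(\<Sum>w\<in>W. part_below t (A w) (\<rho> w)) - \<mu> \<le> (\<Sum>w\<in>{w\<in>W. A w + \<rho> w < t}. \<rho> w)"
    and "(\<Sum>w\<in>{w\<in>W. A w < t}. \<rho> w) \<le> (\<Sum>w\<in>W. part_below t (A w) (\<rho> w)) + \<mu>"
    unfolding Lo_def[symmetric] using Lo Hi X1 X2 by linarith+
qed

definition words :: "nat \<Rightarrow> nat \<Rightarrow> nat list set" where
  "words q M = {w. set w \<subseteq> {..<q} \<and> length w = M}"

lemma finite_words: "finite (words q M)"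
  unfolding words_def by (rule finite_lists_length_eq) auto

lemma words_0: "words q 0 = {[]}"
  unfolding words_def by auto

lemma words_Suc: "words q (Suc M) = (\<lambda>(w, c). w @ [c]) ` (words q M \<times> {..<q})"
proof
  show "words q (Suc M) \<subseteq> (\<lambda>(w, c). w @ [c]) ` (words q M \<times> {..<q})"
  proof
    fix x assume x: "x \<in> words q (Suc M)"
    then have "x \<noteq> []" unfolding words_def by auto
    then obtain v c where vc: "x = v @ [c]" by (metis rev_exhaust)
    with x have "(v, c) \<in> words q M \<times> {..<q}" unfolding words_def by auto
    then show "x \<in> (\<lambda>(w, c). w @ [c]) ` (words q M \<times> {..<q})" unfolding vc by (rule rev_image_eqI) simp
  qed
qed (auto simp: words_def)

context uniform_frequencies
begin

lemma prefix_at_in_words: "prefix_at u k M \<in> words q M"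
  unfolding words_def prefix_at_def using letters by auto

text \<open>The intervals [freq_below w, freq_below w + freq w], w of length M, tile [0, 1].\<close>

lemma sum_words_part_below:
  "(\<Sum>w\<in>words q M. part_below t (freq_below u w) (freq u w)) = part_below t 0 1"
proof (induction M)
  case 0 then show ?case by (simp add: words_0)
next
  case (Suc M)
  have "(\<Sum>w\<in>words q (Suc M). part_below t (freq_below u w) (freq u w))
      = (\<Sum>w\<in>words q M. \<Sum>c<q. part_below t (freq_below u (w @ [c])) (freq u (w @ [c])))"
    unfolding words_Suc
    by (subst sum.reindex) (auto simp: inj_on_def sum.cartesian_product case_prod_beta)
  also have "\<dots> = (\<Sum>w\<in>words q M. part_below t (freq_below u w) (freq u w))"
    unfolding freq_below_snoc
    by (subst part_below_sum_consecutive) (auto simp: freq_nonneg freq_eq_sum_snoc[symmetric])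
  finally show ?case using Suc by simp
qed

lemma freq_below_le_snoc: "freq_below u w \<le> freq_below u (w @ [c])"
  unfolding freq_below_snoc by (simp add: sum_nonneg freq_nonneg)

lemma freq_interval_snoc_end:
  "freq_below u (w @ [c]) + freq u (w @ [c]) = freq_below u w + (\<Sum>c'<Suc c. freq u (w @ [c']))"
  unfolding freq_below_snoc by simp

lemma freq_interval_snoc_le:
  assumes "c < q"
  shows "freq_below u (w @ [c]) + freq u (w @ [c]) \<le> freq_below u w + freq u w"
proof -
  have "(\<Sum>c'<Suc c. freq u (w @ [c'])) \<le> (\<Sum>c'<q. freq u (w @ [c']))"
    using assms by (intro sum_mono2) (auto simp: freq_nonneg)
  then show ?thesis unfolding freq_interval_snoc_end freq_eq_sum_snoc[of w] by simp
qed

lemma freq_interval_snoc_less: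
  assumes "c < c'"
  shows "freq_below u (w @ [c]) + freq u (w @ [c]) \<le> freq_below u (w @ [c'])"
proof -
  have "(\<Sum>c''<Suc c. freq u (w @ [c''])) \<le> (\<Sum>c''<c'. freq u (w @ [c'']))"
    using assms by (intro sum_mono2) (auto simp: freq_nonneg)
  then show ?thesis unfolding freq_interval_snoc_end freq_below_snoc by simp
qed

lemma freq_intervals_disjoint:
  "w \<in> words q M \<Longrightarrow> w' \<in> words q M \<Longrightarrow> w \<noteq> w' \<Longrightarrow>
     freq_below u w + freq u w \<le> freq_below u w' \<or> freq_below u w' + freq u w' \<le> freq_below u w"
proof (induction M arbitrary: w w')
  case 0 then show ?case by (simp add: words_0)
next
  case (Suc M)
  obtain v c v' c' where vc: "w = v @ [c]" "v \<in> words q M" "c < q" "w' = v' @ [c']" "v' \<in> words q M" "c' < q"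
    using Suc.prems(1,2) unfolding words_Suc by auto
  show ?case
  proof (cases "v = v'")
    case True
    then have "c < c' \<or> c' < c" using Suc.prems(3) vc by auto
    then show ?thesis using freq_interval_snoc_less[of c c' v] freq_interval_snoc_less[of c' c v] vc True by auto
  next
    case False
    have bounds: "freq_below u v \<le> freq_below u w" "freq_below u w + freq u w \<le> freq_below u v + freq u v"
      "freq_below u v' \<le> freq_below u w'" "freq_below u w' + freq u w' \<le> freq_below u v' + freq u v'"
      unfolding vc(1,4) using freq_below_le_snoc freq_interval_snoc_le vc(3,6) by auto
    from Suc.IH[OF vc(2,5) False] show ?thesis
    proof
      assume "freq_below u v + freq u v \<le> freq_below u v'"
      then show ?thesis using bounds by linarith
    next
      assume "freq_below u v' + freq u v' \<le> freq_below u v"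
      then show ?thesis using bounds by linarith
    qed
  qed
qed

lemma card_prefix_at_in:
  assumes "P \<subseteq> words q M"
  shows "card {k. k < n \<and> prefix_at u (j + k) M \<in> P} = (\<Sum>w\<in>P. occ_starts u w j n)"
proof -
  have finP: "finite P" using finite_subset[OF assms finite_words] .
  have len: "length w = M" if "w \<in> P" for w using that assms unfolding words_def by auto
  have "{k. k < n \<and> prefix_at u (j + k) M \<in> P} = (\<Union>w\<in>P. {k. k < n \<and> occurs_at w u (j + k)})"
    using len unfolding occurs_at_iff_prefix_at by auto
  also have "card \<dots> = (\<Sum>w\<in>P. card {k. k < n \<and> occurs_at w u (j + k)})"
    using finP len by (intro card_UN_disjoint) (auto simp: occurs_at_iff_prefix_at)
  finally show ?thesis unfolding occ_starts_def .
qed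

lemma uniform_limit_prefix_at_in:
  assumes "P \<subseteq> words q M" "0 < M"
  shows "uniform_limit UNIV (\<lambda>n j. real (card {k. k < Suc n \<and> prefix_at u (j + k) M \<in> P}) / real (Suc n))
           (\<lambda>_. \<Sum>w\<in>P. freq u w) sequentially"
proof -
  have "uniform_limit UNIV (\<lambda>n j. real (occ_starts u w j (Suc n)) / real (Suc n)) (\<lambda>_. freq u w) sequentially"
    if "w \<in> P" for w
  proof -
    have "w \<noteq> []" using that assms unfolding words_def by auto
    then show ?thesis using has_uniform_freq_iff_occ_starts has_uniform_freq_freq by blast
  qed
  then have "uniform_limit UNIV (\<lambda>n j. \<Sum>w\<in>P. real (occ_starts u w j (Suc n)) / real (Suc n))
      (\<lambda>_. \<Sum>w\<in>P. freq u w) sequentially"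
    using finite_subset[OF assms(1) finite_words] by (intro uniform_limit_sum)
  then show ?thesis unfolding card_prefix_at_in[OF assms(1)] by (simp add: sum_divide_distrib)
qed

lemma sum_freq_intervals_below:
  assumes "0 \<le> t" "t \<le> 1" "0 \<le> \<mu>" and small: "\<And>w. w \<in> words q M \<Longrightarrow> freq u w \<le> \<mu>"
  shows "t - \<mu> \<le> (\<Sum>w\<in>{w \<in> words q M. freq_below u w + freq u w < t}. freq u w)"
    and "(\<Sum>w\<in>{w \<in> words q M. freq_below u w < t}. freq u w) \<le> t + \<mu>"
proof -
  have bounds: "0 \<le> freq u w \<and> freq u w \<le> \<mu>" if "w \<in> words q M" for w
    using small[OF that] freq_nonneg by simp
  note intervals = sum_intervals_below[where W = "words q M" and A = "freq_below u" and \<rho> = "freq u"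
      and \<mu> = \<mu> and t = t, OF finite_words bounds assms(3) freq_intervals_disjoint]
  have "part_below t 0 1 = t" unfolding part_below_def using assms by simp
  then show "t - \<mu> \<le> (\<Sum>w\<in>{w \<in> words q M. freq_below u w + freq u w < t}. freq u w)"
    and "(\<Sum>w\<in>{w \<in> words q M. freq_below u w < t}. freq u w) \<le> t + \<mu>"
    using intervals unfolding sum_words_part_below by auto
qed

lemma card_mass_below_window_bounds:
  "card {k. k < n \<and> prefix_at u (j + k) M \<in> {w \<in> words q M. freq_below u w + freq u w < t}}
     \<le> card {k. k < n \<and> mass_below u (j + k) < t}"
  "card {k. k < n \<and> mass_below u (j + k) < t}
     \<le> card {k. k < n \<and> prefix_at u (j + k) M \<in> {w \<in> words q M. freq_below u w < t}}"
proof -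
  have "{k. k < n \<and> prefix_at u (j + k) M \<in> {w \<in> words q M. freq_below u w + freq u w < t}}
      \<subseteq> {k. k < n \<and> mass_below u (j + k) < t}"
  proof
    fix k assume "k \<in> {k. k < n \<and> prefix_at u (j + k) M \<in> {w \<in> words q M. freq_below u w + freq u w < t}}"
    then show "k \<in> {k. k < n \<and> mass_below u (j + k) < t}" using mass_below_bounds(2)[of "j + k" M] by auto
  qed
  then show "card {k. k < n \<and> prefix_at u (j + k) M \<in> {w \<in> words q M. freq_below u w + freq u w < t}}
     \<le> card {k. k < n \<and> mass_below u (j + k) < t}" by (intro card_mono) auto
  have "{k. k < n \<and> mass_below u (j + k) < t}
      \<subseteq> {k. k < n \<and> prefix_at u (j + k) M \<in> {w \<in> words q M. freq_below u w < t}}"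
  proof
    fix k assume "k \<in> {k. k < n \<and> mass_below u (j + k) < t}"
    then show "k \<in> {k. k < n \<and> prefix_at u (j + k) M \<in> {w \<in> words q M. freq_below u w < t}}"
      using mass_below_bounds(1)[of "j + k" M] prefix_at_in_words[of "j + k" M] by auto
  qed
  then show "card {k. k < n \<and> mass_below u (j + k) < t}
     \<le> card {k. k < n \<and> prefix_at u (j + k) M \<in> {w \<in> words q M. freq_below u w < t}}"
    by (intro card_mono) auto
qed

end

context recurrent_uniform_frequencies
begin

text \<open>The values mass_below (j + k) lie in the interval of the length-M prefix of T^(j+k) u,
  so the proportion of them below t is squeezed between the frequencies of the words whose
  intervals lie below t and of those starting below t; these differ from t by at most the
  frequency of a single word of length M, which is small for large M.\<close>

lemma mass_below_equidistributed:
  assumes "0 \<le> t" "t \<le> 1"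
  shows "uniform_limit UNIV (\<lambda>n j. real (card {k. k < n \<and> mass_below u (j + k) < t}) / real n)
           (\<lambda>_. t) sequentially"
proof -
  define count where "count P n j = real (card {k. k < Suc n \<and> P (j + k)}) / real (Suc n)" for P n j
  have "uniform_limit UNIV (count (\<lambda>k. mass_below u k < t)) (\<lambda>_. t) sequentially"
  proof (rule uniform_limit_sandwich)
    fix \<epsilon> :: real assume "0 < \<epsilon>"
    obtain M0 where M0: "\<forall>w. M0 \<le> length w \<longrightarrow> freq u w < \<epsilon>" using freq_small[OF \<open>0 < \<epsilon>\<close>] by blast
    define M where "M = Suc M0"
    define Pin where "Pin = {w \<in> words q M. freq_below u w + freq u w < t}"
    define Pout where "Pout = {w \<in> words q M. freq_below u w < t}"
    have "freq u w \<le> \<epsilon>" if "w \<in> words q M" for w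
      using that M0[rule_format, of w] unfolding words_def M_def by simp
    then have sums: "t - \<epsilon> \<le> (\<Sum>w\<in>Pin. freq u w)" "(\<Sum>w\<in>Pout. freq u w) \<le> t + \<epsilon>"
      using sum_freq_intervals_below[OF assms, of \<epsilon> M] \<open>0 < \<epsilon>\<close> unfolding Pin_def Pout_def by auto
    have lim: "uniform_limit UNIV (count (\<lambda>k. prefix_at u k M \<in> P)) (\<lambda>_. \<Sum>w\<in>P. freq u w) sequentially"
      if "P \<subseteq> words q M" for P
      using uniform_limit_prefix_at_in[OF that] unfolding count_def M_def by simp
    have "Pin \<subseteq> words q M" "Pout \<subseteq> words q M" unfolding Pin_def Pout_def by auto
    note lims = lim[OF this(1)] lim[OF this(2)]
    have "count (\<lambda>k. prefix_at u k M \<in> Pin) n j \<le> count (\<lambda>k. mass_below u k < t) n j"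
      "count (\<lambda>k. mass_below u k < t) n j \<le> count (\<lambda>k. prefix_at u k M \<in> Pout) n j" for n j
      unfolding count_def Pin_def Pout_def using card_mass_below_window_bounds
      by (simp_all add: divide_right_mono)
    then have squeeze: "\<forall>n j. count (\<lambda>k. prefix_at u k M \<in> Pin) n j \<le> count (\<lambda>k. mass_below u k < t) n j
        \<and> count (\<lambda>k. mass_below u k < t) n j \<le> count (\<lambda>k. prefix_at u k M \<in> Pout) n j" by simp
    show "\<exists>lo hi L1 L2. (\<forall>n j. lo n j \<le> count (\<lambda>k. mass_below u k < t) n j
        \<and> count (\<lambda>k. mass_below u k < t) n j \<le> hi n j)
      \<and> uniform_limit UNIV lo (\<lambda>_. L1) sequentially \<and> uniform_limit UNIV hi (\<lambda>_. L2) sequentially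
      \<and> t - \<epsilon> \<le> L1 \<and> L2 \<le> t + \<epsilon>"
      by (intro exI[of _ "count (\<lambda>k. prefix_at u k M \<in> Pin)"] exI[of _ "count (\<lambda>k. prefix_at u k M \<in> Pout)"]
          exI[of _ "\<Sum>w\<in>Pin. freq u w"] exI[of _ "\<Sum>w\<in>Pout. freq u w"] conjI squeeze lims sums)
  qed
  then show ?thesis unfolding count_def by (rule filterlim_sequentially_Suc[THEN iffD1])
qed

lemma canonical_mass_below: "canonical (mass_below u)"
proof -
  have "\<forall>t\<in>{0..1}. uniform_limit UNIV (\<lambda>n j. real (card {k. k < n \<and> mass_below u (j + k) < t}) / real n)
      (\<lambda>_. t) sequentially"
    using mass_below_equidistributed by simp
  then show ?thesis
    using inj_mass_below mass_below_01 unfolding canonical_def uniform_limit_sequentially_iff dist_real_def by simp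
qed

end

theorem mainTheorem3:
  fixes u :: "nat \<Rightarrow> nat" and q :: nat
  assumes "\<forall>n. u n < q"
    and "recurrent u"
    and "aperiodic u"
  shows "ergodic_perm (valid_perm u) \<longleftrightarrow>
    (\<forall>w. w \<noteq> [] \<and> factor w u \<longrightarrow> (\<exists>\<rho>. has_uniform_freq u w \<rho> \<and> \<rho> \<noteq> 0))"
proof
  assume "ergodic_perm (valid_perm u)"
  then obtain a where "canonical a" "\<forall>i j. a i < a j \<longleftrightarrow> valid_perm u i j"
    unfolding ergodic_perm_def by blast
  then show "\<forall>w. w \<noteq> [] \<and> factor w u \<longrightarrow> (\<exists>\<rho>. has_uniform_freq u w \<rho> \<and> \<rho> \<noteq> 0)"
    using uniform_freq_if_canonical assms(2) by blast
next
  assume "\<forall>w. w \<noteq> [] \<and> factor w u \<longrightarrow> (\<exists>\<rho>. has_uniform_freq u w \<rho> \<and> \<rho> \<noteq> 0)"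
  then interpret recurrent_uniform_frequencies u q
    using assms by unfold_locales
  show "ergodic_perm (valid_perm u)"
    unfolding ergodic_perm_def using canonical_mass_below mass_below_less_iff by blast
qed

end
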